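(* Let $n\in\mathbb Z_{>0}$ and let $B$ be a (closed, filled) convex $n$-sided polygon in $D$ with vertices $A_1,\ldots,A_n$ in counterclockwise order; set $A_{n+1}=A_1$. For $1\leq i\leq n$ let $u_i,v_i\in S^1$ be the intersections of the line $A_iA_{i+1}$ with $S^1$, with $u_i$ closer to $A_i$ than to $A_{i+1}$; set $u_{n+1}=u_1$. Then for $1\leq i\leq n$: (1) if $v\in arc[u_i,u_{i+1})$, then $\psi_B(v)=\psi_{A_{i+1}}(v)$; (2) if $v\in arc(u_i,u_{i+1})$, then $\psi_B'(v)=\dfrac{|A_{i+1}\psi_{A_{i+1}}(v)|}{|vA_{i+1}|}$; (3) $\psi_{B+}'(u_i)=\dfrac{|A_{i+1}\psi_{A_{i+1}}(u_i)|}{|u_iA_{i+1}|}$ and $\psi_{B-}'(u_i)=\dfrac{|A_i\psi_{A_i}(u_i)|}{|u_iA_i|}$.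
   Context: $D$ is the open unit disk in $\mathbb R^2$, $S^1$ its boundary circle identified with $\mathbb R/\mathbb Z$ via the counterclockwise normalized angle, $\pi:\mathbb R\to S^1$ the projection. For a closed convex $U\subset D$ and $v\in S^1$, $\psi_U(v)$ is the point $w\in S^1\setminus\{v\}$ such that the line $vw$ meets $U$ and $U$ lies in the closed half-plane to the left of the directed line from $v$ to $w$; for a point $P\in D$, $\psi_P(v)$ is the second intersection point of the line $vP$ with $S^1$. For a homeomorphism $g$ of $S^1$ with lift $\overline g$ ($\overline g(0)\in[0,1)$) and $x\in S^1$, $g'(x)$, $g'_+(x)$, $g'_-(x)$ denote $\overline g'(u)$, the right derivative $\overline g'_+(u)$, the left derivative $\overline g'_-(u)$ for $u\in\pi^{-1}(x)$. $|XY|$ is Euclidean distance. For $w_1,w_2\in S^1$, $arc[w_1,w_2)$ is the counterclockwise arc from $w_1$ to $w_2$ including $w_1$ and excluding $w_2$; $arc(w_1,w_2)$ excludes both endpoints. *)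

theory Defs
  imports "HOL-Analysis.Analysis"
begin

text \<open>The plane is modelled by the complex numbers; the unit circle S^1 is
  the set of unit-modulus complex numbers, identified with R/Z through the
  projection below (counterclockwise normalized angle).\<close>

definition circ_proj :: "real \<Rightarrow> complex" where
  "circ_proj t = cis (2 * pi * t)"

definition on_circle :: "complex \<Rightarrow> bool" where
  "on_circle w \<longleftrightarrow> cmod w = 1"

definition left_of :: "complex \<Rightarrow> complex \<Rightarrow> complex \<Rightarrow> bool" where
  "left_of v w p \<longleftrightarrow> Im (cnj (w - v) * (p - v)) \<ge> 0"

definition on_line :: "complex \<Rightarrow> complex \<Rightarrow> complex \<Rightarrow> bool" where
  "on_line v w p \<longleftrightarrow> (\<exists>t::real. p = v + complex_of_real t * (w - v))"

definition psi_set :: "complex set \<Rightarrow> complex \<Rightarrow> complex" where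
  "psi_set U v = (THE w. on_circle w \<and> w \<noteq> v \<and> (\<exists>p\<in>U. on_line v w p)
                          \<and> (\<forall>p\<in>U. left_of v w p))"

definition psi_pt :: "complex \<Rightarrow> complex \<Rightarrow> complex" where
  "psi_pt P v = (THE w. on_circle w \<and> w \<noteq> v \<and> on_line v w P)"

definition circle_lift :: "(complex \<Rightarrow> complex) \<Rightarrow> real \<Rightarrow> real" where
  "circle_lift g = (THE G. continuous_on UNIV G \<and> (\<forall>t. circ_proj (G t) = g (circ_proj t))
                          \<and> 0 \<le> G 0 \<and> G 0 < 1)"

definition arc_co :: "complex \<Rightarrow> complex \<Rightarrow> complex set" where
  "arc_co w1 w2 = {circ_proj x | x. \<exists>a b. circ_proj a = w1 \<and> circ_proj b = w2 \<and>
                        a < b \<and> b \<le> a + 1 \<and> a \<le> x \<and> x < b}"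

definition arc_oo :: "complex \<Rightarrow> complex \<Rightarrow> complex set" where
  "arc_oo w1 w2 = {circ_proj x | x. \<exists>a b. circ_proj a = w1 \<and> circ_proj b = w2 \<and>
                        a < b \<and> b \<le> a + 1 \<and> a < x \<and> x < b}"

definition line_circle_near :: "complex \<Rightarrow> complex \<Rightarrow> complex" where
  "line_circle_near P Q = (THE u. on_circle u \<and> on_line P Q u \<and> cmod (u - P) < cmod (u - Q))"

text \<open>Vertices A 0, ..., A (n-1) (indices mod n) form a convex n-gon in
  counterclockwise order: every other vertex is strictly left of each directed edge.\<close>
definition ccw_convex_polygon :: "nat \<Rightarrow> (nat \<Rightarrow> complex) \<Rightarrow> bool" where
  "ccw_convex_polygon n A \<longleftrightarrow> 3 \<le> n \<and>
     (\<forall>i<n. \<forall>j<n. j \<noteq> i \<and> j \<noteq> Suc i mod n \<longrightarrow>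
        Im (cnj (A (Suc i mod n) - A i) * (A j - A i)) > 0)"

end

theory Submission
  imports Defs
begin

(* For v on the circle and a finite set V in the disk, psi of the convex hull of V at v is
   psi_P(v) for any P in V such that all of V lies left of the directed line v P.  Such a
   supporting point always exists, and points supporting at circle points close to v also
   support at v, which makes psi_B continuous and gives it a lift.  For P in the disk, psi_P
   is the restriction to the circle of the disk automorphism z |-> (P - z) / (1 - conj P z);
   differentiating it gives the angular speed (1 - |P|^2) / |v - P|^2 = |P psi_P(v)| / |v P|.
   For the polygon, A_(i+1) supports at every v of arc[u_i, u_(i+1)): comparing the arc with the
   chords from u_i and from u_(i+1) through A_(i+1) shows that v lies outside the half-plane of
   the edge A_i A_(i+1) but inside that of the edge A_(i+1) A_(i+2).  At u_i two such arcs meet,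
   on which psi_B coincides with psi_(A_(i+1)) and psi_(A_i); this gives the one-sided
   derivatives. *)

subsection \<open>Cross products and lines through the disk\<close>

definition wedge :: "complex \<Rightarrow> complex \<Rightarrow> real" where
  "wedge a b = Im (cnj a * b)"

lemma wedge_eq: "wedge a b = Re a * Im b - Im a * Re b"
  by (simp add: wedge_def)

lemma left_of_iff_wedge: "left_of v w p \<longleftrightarrow> 0 \<le> wedge (w - v) (p - v)"
  by (simp add: left_of_def wedge_def)

lemma wedge_scale_left: "wedge (of_real r * a) b = r * wedge a b"
  by (simp add: wedge_eq algebra_simps)

lemma wedge_scale_right: "wedge a (of_real r * b) = r * wedge a b"
  by (simp add: wedge_eq algebra_simps)

lemma wedge_mult_mult: "wedge (c * a) (c * b) = (cmod c)\<^sup>2 * wedge a b"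
  unfolding cmod_power2 by (simp add: wedge_eq algebra_simps power2_eq_square)

lemma wedge_eq_0_imp_parallel:
  assumes "wedge d e = 0" "d \<noteq> 0"
  obtains l where "e = of_real l * d"
proof
  have "Re d * Im e = Im d * Re e" using assms(1) by (simp add: wedge_eq)
  then have "of_real ((cmod d)\<^sup>2) * e = of_real (Re (cnj d * e)) * d"
    unfolding cmod_power2 by (simp add: complex_eq_iff algebra_simps power2_eq_square)
  then show "e = of_real (Re (cnj d * e) / (cmod d)\<^sup>2) * d"
    using assms(2) by (simp add: field_simps)
qed

lemma wedge_eq_inner: "wedge a b = inner (\<i> * a) b"
  by (simp add: wedge_eq inner_complex_def)

lemma convex_wedge_halfplane: "convex {q. 0 \<le> wedge d (q - v)}"
proof -
  have "{q. 0 \<le> wedge d (q - v)} = {q. inner (\<i> * d) q \<ge> inner (\<i> * d) v}"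
    by (simp add: wedge_eq_inner inner_diff_right)
  then show ?thesis by (simp add: convex_halfspace_ge)
qed

lemma wedge_cone_nonneg:
  assumes "0 < wedge b a" "0 \<le> wedge b q" "0 \<le> wedge q a" "0 \<le> wedge a y" "0 \<le> wedge b y"
  shows "0 \<le> wedge q y"
proof -
  have "wedge q y * wedge b a = wedge b q * wedge a y + wedge q a * wedge b y"
    by (simp add: wedge_eq algebra_simps)
  also have "\<dots> \<ge> 0" using assms by simp
  finally show ?thesis using assms(1) by (simp add: zero_le_mult_iff)
qed

lemma norm_add_scaled_power2:
  "(cmod (Y + of_real s * d))\<^sup>2 = (cmod Y)\<^sup>2 + 2 * s * Re (cnj Y * d) + s\<^sup>2 * (cmod d)\<^sup>2"
  unfolding cmod_power2 by (simp add: power2_eq_square algebra_simps)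

lemma line_circle_params_opposite:
  assumes r: "cmod (Y + of_real r * d) < 1"
    and s: "cmod (Y + of_real s * d) = 1" and t: "cmod (Y + of_real t * d) = 1" and "s \<noteq> t"
  shows "(s - r) * (t - r) < 0"
proof -
  define a b c where "a = (cmod d)\<^sup>2" and "b = 2 * Re (cnj Y * d)" and "c = (cmod Y)\<^sup>2 - 1"
  have q: "(cmod (Y + of_real x * d))\<^sup>2 - 1 = a * x\<^sup>2 + b * x + c" for x
    unfolding a_def b_def c_def norm_add_scaled_power2 by (simp add: algebra_simps)
  have qs: "a * s\<^sup>2 + b * s + c = 0" and qt: "a * t\<^sup>2 + b * t + c = 0"
    using q[of s] q[of t] s t by simp_all
  have "(s - t) * (a * (s + t) + b) = 0"
    using qs qt by (simp add: algebra_simps power2_eq_square)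
  then have b: "b = - a * (s + t)" using \<open>s \<noteq> t\<close> by simp
  have "c = a * s * t" using qs unfolding b by algebra
  then have "a * ((s - r) * (t - r)) = (cmod (Y + of_real r * d))\<^sup>2 - 1"
    unfolding q b by (simp add: algebra_simps power2_eq_square)
  also have "\<dots> < 0" using r by (simp add: abs_square_less_1)
  finally show ?thesis using zero_le_power2[of "cmod d"] unfolding a_def
    by (simp add: mult_less_0_iff)
qed

lemma chord_param_bounds:
  assumes "cmod v = 1" "cmod w = 1" "v \<noteq> w" "cmod (v + of_real t * (w - v)) < 1"
  shows "0 < t" "t < 1"
proof -
  have "(0 - t) * (1 - t) < 0"
    by (rule line_circle_params_opposite[of v t "w - v"]) (use assms in simp_all)
  then show "0 < t" "t < 1" by (auto simp: zero_less_mult_iff)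
qed

lemma circle_second_intersection_unique:
  assumes v: "cmod v = 1" and "d \<noteq> 0"
    and "cmod (v + of_real s * d) = 1" "cmod (v + of_real t * d) = 1" "s \<noteq> 0" "t \<noteq> 0"
  shows "s = t"
proof -
  have "(cmod (v + of_real x * d))\<^sup>2 - 1 = x * (2 * Re (cnj v * d) + x * (cmod d)\<^sup>2)" for x
    unfolding norm_add_scaled_power2 using v by (simp add: algebra_simps power2_eq_square)
  then have "2 * Re (cnj v * d) + s * (cmod d)\<^sup>2 = 0" "2 * Re (cnj v * d) + t * (cmod d)\<^sup>2 = 0"
    using assms(3-6) by (metis diff_self mult_eq_0_iff one_power2)+
  then have "s * (cmod d)\<^sup>2 = t * (cmod d)\<^sup>2" by linarith
  then show ?thesis using \<open>d \<noteq> 0\<close> by simp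
qed

lemma ray_leaves_disk:
  assumes Y: "cmod Y < 1" and d: "d \<noteq> 0" and "cmod (Y + d) < 1"
  obtains s where "1 < s" "cmod (Y + of_real s * d) = 1"
proof -
  define T where "T = 1 + 2 / cmod d"
  have "1 \<le> T" by (simp add: T_def)
  have "cmod (of_real T * d) = T * cmod d" using \<open>1 \<le> T\<close> by (simp add: norm_mult)
  also have "\<dots> = cmod d + 2" using d by (simp add: T_def field_simps)
  finally have "cmod (of_real T * d) = cmod d + 2" .
  moreover have "cmod (of_real T * d) \<le> cmod (Y + of_real T * d) + cmod Y"
    using norm_triangle_sub[of "of_real T * d" "Y + of_real T * d"] by simp
  ultimately have "1 \<le> cmod (Y + of_real T * d)" using Y norm_ge_zero[of d] by linarith
  moreover have "cmod (Y + of_real 1 * d) \<le> 1" using assms(3) by simp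
  moreover have "continuous_on {1..T} (\<lambda>s. cmod (Y + of_real s * d))"
    by (intro continuous_intros)
  ultimately obtain s where s: "1 \<le> s" "cmod (Y + of_real s * d) = 1"
    using IVT'[of "\<lambda>s. cmod (Y + of_real s * d)" 1 1 T] \<open>1 \<le> T\<close> by auto
  moreover have "s \<noteq> 1" using s(2) assms(3) by auto
  ultimately show ?thesis using that[of s] by simp
qed

lemma line_circle_far_param_unique:
  assumes X: "cmod X < 1" and Y: "cmod Y < 1"
    and s: "1/2 < s" "cmod (Y + of_real s * (X - Y)) = 1"
    and s0: "1 < s0" "cmod (Y + of_real s0 * (X - Y)) = 1"
  shows "s = s0"
proof (rule ccontr)
  assume "s \<noteq> s0"
  \<comment> \<open>the two circle points of the line lie on opposite sides of both X and Y\<close>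
  then have "(s - 1) * (s0 - 1) < 0" "(s - 0) * (s0 - 0) < 0"
    using line_circle_params_opposite[of Y 1 "X - Y" s s0]
      line_circle_params_opposite[of Y 0 "X - Y" s s0] s s0 X Y
    by simp_all
  with s(1) s0(1) show False by (auto simp: mult_less_0_iff)
qed

lemma line_circle_near_eq:
  assumes X: "cmod X < 1" and Y: "cmod Y < 1" and "X \<noteq> Y"
  obtains s where "1 < s" "line_circle_near X Y = Y + of_real s * (X - Y)"
    "cmod (line_circle_near X Y) = 1"
proof -
  have "X - Y \<noteq> 0" using \<open>X \<noteq> Y\<close> by simp
  obtain s0 where "1 < s0" and s0: "cmod (Y + of_real s0 * (X - Y)) = 1"
    using ray_leaves_disk[OF Y \<open>X - Y \<noteq> 0\<close>] X by auto
  have dist_u: "cmod (u - X) = \<bar>s - 1\<bar> * cmod (X - Y)" "cmod (u - Y) = \<bar>s\<bar> * cmod (X - Y)"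
    if "u = Y + of_real s * (X - Y)" for u s
  proof -
    have "u - X = of_real (s - 1) * (X - Y)" "u - Y = of_real s * (X - Y)"
      using that by (simp_all add: algebra_simps)
    then show "cmod (u - X) = \<bar>s - 1\<bar> * cmod (X - Y)" "cmod (u - Y) = \<bar>s\<bar> * cmod (X - Y)"
      by (simp_all only: norm_mult norm_of_real)
  qed
  define u0 where "u0 = Y + of_real s0 * (X - Y)"
  have "line_circle_near X Y = u0"
    unfolding line_circle_near_def
  proof (rule the_equality)
    show "on_circle u0 \<and> on_line X Y u0 \<and> cmod (u0 - X) < cmod (u0 - Y)"
      unfolding on_circle_def on_line_def
    proof (intro conjI exI)
      show "cmod u0 = 1" using s0 by (simp add: u0_def)
      show "u0 = X + of_real (1 - s0) * (Y - X)" by (simp add: u0_def algebra_simps)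
      show "cmod (u0 - X) < cmod (u0 - Y)"
        using dist_u[OF u0_def] \<open>1 < s0\<close> \<open>X - Y \<noteq> 0\<close> by simp
    qed
    fix u assume u: "on_circle u \<and> on_line X Y u \<and> cmod (u - X) < cmod (u - Y)"
    then obtain t where "u = X + of_real t * (Y - X)" unfolding on_line_def by blast
    then have us: "u = Y + of_real (1 - t) * (X - Y)" by (simp add: algebra_simps)
    have "1/2 < 1 - t" using u dist_u[OF us] \<open>X - Y \<noteq> 0\<close> by auto
    moreover have "cmod (Y + of_real (1 - t) * (X - Y)) = 1" using u us by (simp add: on_circle_def)
    ultimately have "1 - t = s0"
      using line_circle_far_param_unique[OF X Y _ _ \<open>1 < s0\<close> s0] by blast
    then show "u = u0" using us by (simp add: u0_def)
  qed
  then show ?thesis using that[of s0] \<open>1 < s0\<close> s0 by (simp add: u0_def)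
qed

subsection \<open>The map psi of a point\<close>

lemma one_minus_cnj_mult_eq:
  assumes "cmod v = 1"
  shows "1 - cnj P * v = v * cnj (v - P)"
proof -
  have "v * cnj v = 1" using assms complex_norm_square[of v] by simp
  then show ?thesis by (simp add: algebra_simps)
qed

lemma norm_one_minus_cnj_mult:
  assumes "cmod v = 1"
  shows "cmod (1 - cnj P * v) = cmod (v - P)"
  using assms by (simp only: one_minus_cnj_mult_eq norm_mult complex_mod_cnj)

lemma moebius_on_ray:
  assumes v: "cmod v = 1" and P: "cmod P < 1"
  obtains \<sigma> where "1 < \<sigma>" "(P - v) / (1 - cnj P * v) = v + of_real \<sigma> * (P - v)"
proof
  define D N where "D = (cmod (P - v))\<^sup>2" and "N = 2 * (1 - Re (cnj v * P))"
  have h: "(Re v)\<^sup>2 + (Im v)\<^sup>2 = 1" using v by (metis cmod_power2 one_power2)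
  have "P \<noteq> v" using v P by auto
  then have D: "D > 0" unfolding D_def by simp
  have "D = (cmod P)\<^sup>2 - 2 * Re (cnj v * P) + 1"
    unfolding D_def cmod_power2 using h by (simp add: power2_eq_square algebra_simps)
  then show "1 < N / D"
    using D P unfolding N_def by (simp add: abs_square_less_1)
  have key: "(P - v) * of_real D = (of_real D * v + of_real N * (P - v)) * (1 - cnj P * v)"
    unfolding D_def N_def cmod_power2
    by (simp add: complex_eq_iff algebra_simps power2_eq_square) (use h[unfolded power2_eq_square] in algebra)
  have "1 - cnj P * v \<noteq> 0"
    using norm_one_minus_cnj_mult[OF v, of P] \<open>P \<noteq> v\<close> by auto
  with key D show "(P - v) / (1 - cnj P * v) = v + of_real (N / D) * (P - v)"
    by (simp add: field_simps)
qed

lemma psi_pt_eq_moebius: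
  assumes v: "cmod v = 1" and P: "cmod P < 1"
  shows "psi_pt P v = (P - v) / (1 - cnj P * v)"
  unfolding psi_pt_def
proof (rule the_equality)
  define M where "M = (P - v) / (1 - cnj P * v)"
  obtain \<sigma> where \<sigma>: "1 < \<sigma>" "M = v + of_real \<sigma> * (P - v)"
    using moebius_on_ray[OF v P] unfolding M_def by blast
  have "P \<noteq> v" using v P by auto
  have M: "cmod M = 1"
    unfolding M_def using norm_one_minus_cnj_mult[OF v, of P] \<open>P \<noteq> v\<close>
    by (simp add: norm_divide norm_minus_commute)
  show "on_circle M \<and> M \<noteq> v \<and> on_line v M P"
  proof (intro conjI)
    show "on_circle M" using M by (simp add: on_circle_def)
    show "M \<noteq> v" using \<sigma> \<open>P \<noteq> v\<close> by simp
    show "on_line v M P"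
      unfolding on_line_def using \<sigma> by (intro exI[of _ "1 / \<sigma>"]) simp
  qed
  fix w assume "on_circle w \<and> w \<noteq> v \<and> on_line v w P"
  then obtain t where w: "cmod w = 1" "w \<noteq> v" and t: "P = v + of_real t * (w - v)"
    unfolding on_circle_def on_line_def by blast
  have "t \<noteq> 0" using t \<open>P \<noteq> v\<close> by auto
  then have w_eq: "w = v + of_real (1 / t) * (P - v)" using t by (simp add: field_simps)
  have "1 / t = \<sigma>"
  proof (rule circle_second_intersection_unique[OF v])
    show "cmod (v + of_real (1 / t) * (P - v)) = 1" using w w_eq by simp
    show "cmod (v + of_real \<sigma> * (P - v)) = 1"
      using \<sigma> M by simp
  qed (use \<sigma> \<open>t \<noteq> 0\<close> \<open>P \<noteq> v\<close> in auto)
  then show "w = M" using w_eq \<sigma> by simp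
qed

lemma psi_pt_on_ray:
  assumes "cmod v = 1" "cmod P < 1"
  obtains \<sigma> where "1 < \<sigma>" "psi_pt P v = v + of_real \<sigma> * (P - v)"
  using moebius_on_ray[OF assms] psi_pt_eq_moebius[OF assms] by metis

lemma psi_pt_on_circle:
  assumes "cmod v = 1" "cmod P < 1"
  shows "cmod (psi_pt P v) = 1"
proof -
  have "P \<noteq> v" using assms by auto
  then show ?thesis
    using psi_pt_eq_moebius[OF assms] norm_one_minus_cnj_mult[OF assms(1), of P]
    by (simp add: norm_divide norm_minus_commute)
qed

lemma psi_pt_neq:
  assumes "cmod v = 1" "cmod P < 1"
  shows "psi_pt P v \<noteq> v"
proof -
  obtain \<sigma> where "1 < \<sigma>" "psi_pt P v = v + of_real \<sigma> * (P - v)"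
    using psi_pt_on_ray[OF assms] .
  moreover have "P \<noteq> v" using assms by auto
  ultimately show ?thesis by simp
qed

lemma psi_pt_chord_wedge:
  assumes "cmod v = 1" "cmod P < 1"
  obtains \<sigma> where "0 < \<sigma>" "\<And>y. wedge (psi_pt P v - v) (y - v) = \<sigma> * wedge (P - v) (y - v)"
proof -
  obtain \<sigma> where "1 < \<sigma>" "psi_pt P v = v + of_real \<sigma> * (P - v)"
    using psi_pt_on_ray[OF assms] .
  then show ?thesis using that[of \<sigma>] by (simp add: wedge_scale_left)
qed

lemma continuous_on_psi_pt:
  assumes "cmod P < 1"
  shows "continuous_on (sphere 0 1) (psi_pt P)"
proof -
  have "1 - cnj P * v \<noteq> 0" if "v \<in> sphere 0 1" for v
  proof -
    have "cmod (cnj P * v) < 1" using that assms by (simp add: norm_mult)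
    then show ?thesis by auto
  qed
  then have "continuous_on (sphere 0 1) (\<lambda>v. (P - v) / (1 - cnj P * v))"
    by (intro continuous_intros) auto
  then show ?thesis
    by (rule continuous_on_cong[THEN iffD1, rotated 2]) (use psi_pt_eq_moebius assms in auto)
qed

subsection \<open>The map psi of a convex hull\<close>

lemma psi_set_eqI:
  assumes B: "B \<subseteq> ball 0 1" and v: "cmod v = 1" and w: "cmod w = 1" "w \<noteq> v"
    and p: "p \<in> B" "on_line v w p" and left: "\<forall>q\<in>B. left_of v w q"
  shows "psi_set B v = w"
  unfolding psi_set_def
proof (rule the_equality)
  show "on_circle w \<and> w \<noteq> v \<and> (\<exists>p\<in>B. on_line v w p) \<and> (\<forall>p\<in>B. left_of v w p)"
    using assms unfolding on_circle_def by blast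
  fix w' assume "on_circle w' \<and> w' \<noteq> v \<and> (\<exists>p\<in>B. on_line v w' p) \<and> (\<forall>p\<in>B. left_of v w' p)"
  then obtain p' t' where w': "cmod w' = 1" "w' \<noteq> v" and left': "\<forall>q\<in>B. left_of v w' q"
    and p': "p' \<in> B" "p' = v + of_real t' * (w' - v)"
    unfolding on_line_def on_circle_def by blast
  obtain t where t: "p = v + of_real t * (w - v)" using p unfolding on_line_def by blast
  have "cmod p < 1" "cmod p' < 1" using B p p' by auto
  then have "0 < t" "0 < t'"
    using chord_param_bounds(1)[OF v w(1) w(2)[symmetric], of t]
      chord_param_bounds(1)[OF v w'(1) w'(2)[symmetric], of t'] t p' by simp_all
  \<comment> \<open>each of the two chords has the other one's interior point on its left, so they are parallel\<close>
  have "0 \<le> t * wedge (w' - v) (w - v)"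
    using left'[rule_format, OF p(1)] t by (simp add: left_of_iff_wedge wedge_scale_right)
  moreover have "0 \<le> t' * wedge (w - v) (w' - v)"
    using left[rule_format, OF p'(1)] p'(2) by (simp add: left_of_iff_wedge wedge_scale_right)
  moreover have "wedge (w - v) (w' - v) = - wedge (w' - v) (w - v)"
    by (simp add: wedge_eq)
  ultimately have "wedge (w - v) (w' - v) = 0"
    using \<open>0 < t\<close> \<open>0 < t'\<close> by (smt (verit) zero_le_mult_iff)
  moreover have "w - v \<noteq> 0" using w(2) by simp
  ultimately obtain l where "w' - v = of_real l * (w - v)" by (rule wedge_eq_0_imp_parallel)
  then have l: "w' = v + of_real l * (w - v)" by (simp add: algebra_simps)
  have "l = 1"
  proof (rule circle_second_intersection_unique[OF v])
    show "cmod (v + of_real l * (w - v)) = 1" using l w' by simp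
  qed (use w l w' in auto)
  then show "w' = w" using l by simp
qed

lemma psi_set_eq_psi_pt:
  assumes B: "B \<subseteq> ball 0 1" and v: "cmod v = 1"
    and p: "p \<in> B" and supp: "\<forall>q\<in>B. 0 \<le> wedge (p - v) (q - v)"
  shows "psi_set B v = psi_pt p v"
proof -
  have P: "cmod p < 1" using B p by auto
  obtain \<sigma> where \<sigma>: "1 < \<sigma>" "psi_pt p v = v + of_real \<sigma> * (p - v)"
    using psi_pt_on_ray[OF v P] .
  show ?thesis
  proof (rule psi_set_eqI[OF B v psi_pt_on_circle[OF v P] psi_pt_neq[OF v P] p])
    show "on_line v (psi_pt p v) p"
      unfolding on_line_def \<sigma>(2) using \<sigma>(1) by (intro exI[of _ "1 / \<sigma>"]) simp
    show "\<forall>q\<in>B. left_of v (psi_pt p v) q"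
      using supp \<sigma> by (simp add: left_of_iff_wedge wedge_scale_left)
  qed
qed

definition supporting_points :: "complex set \<Rightarrow> complex \<Rightarrow> complex set" where
  "supporting_points V v = {p \<in> V. \<forall>q\<in>V. 0 \<le> wedge (p - v) (q - v)}"

lemma psi_set_hull_eq_psi_pt:
  assumes V: "V \<subseteq> ball 0 1" and v: "cmod v = 1" and p: "p \<in> supporting_points V v"
  shows "psi_set (convex hull V) v = psi_pt p v"
proof (rule psi_set_eq_psi_pt[OF _ v])
  show "convex hull V \<subseteq> ball 0 1" using V by (simp add: hull_minimal)
  show "p \<in> convex hull V" using p by (simp add: supporting_points_def hull_inc)
  have "convex hull V \<subseteq> {q. 0 \<le> wedge (p - v) (q - v)}"
    using p by (intro hull_minimal convex_wedge_halfplane) (auto simp: supporting_points_def)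
  then show "\<forall>q\<in>convex hull V. 0 \<le> wedge (p - v) (q - v)" by blast
qed

lemma supporting_points_nonempty:
  assumes "finite V" "V \<noteq> {}" and V: "V \<subseteq> ball 0 1" and v: "cmod v = 1"
  shows "supporting_points V v \<noteq> {}"
proof -
  \<comment> \<open>after the motion q \<mapsto> - cnj v * (q - v) the disk lies in the right half-plane; the point of least slope supports\<close>
  define z where "z q = - cnj v * (q - v)" for q
  have "cnj v * v = 1" using v complex_norm_square[of v] by (simp add: mult.commute)
  then have Re_z: "0 < Re (z q)" if "q \<in> V" for q
    using complex_Re_le_cmod[of "cnj v * q"] V that v
    by (auto simp: z_def algebra_simps norm_mult)
  define slope where "slope q = Im (z q) / Re (z q)" for q
  define p where "p = arg_min_on slope V"
  have p: "p \<in> V" "\<And>q. q \<in> V \<Longrightarrow> slope p \<le> slope q"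
    using arg_min_if_finite(1)[OF assms(1,2)] arg_min_least[OF assms(1,2)] unfolding p_def by auto
  have "0 \<le> wedge (p - v) (q - v)" if q: "q \<in> V" for q
  proof -
    have "wedge (p - v) (q - v) = wedge (z p) (z q)"
      unfolding z_def wedge_mult_mult using v by simp
    also have "\<dots> = Re (z p) * Re (z q) * (slope q - slope p)"
      unfolding slope_def wedge_eq using Re_z[OF p(1)] Re_z[OF q] by (simp add: field_simps)
    also have "\<dots> \<ge> 0" using Re_z[OF p(1)] Re_z[OF q] p(2)[OF q] by simp
    finally show ?thesis .
  qed
  then show ?thesis using p(1) unfolding supporting_points_def by blast
qed

lemma eventually_supporting_points_subset:
  assumes "finite V"
  shows "eventually (\<lambda>v. supporting_points V v \<subseteq> supporting_points V v0) (at v0 within S)"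
proof -
  have "eventually (\<lambda>v. p \<in> supporting_points V v \<longrightarrow> p \<in> supporting_points V v0) (at v0 within S)"
    if "p \<in> V" for p
  proof (cases "p \<in> supporting_points V v0")
    case False
    then obtain q where "q \<in> V" "wedge (p - v0) (q - v0) < 0"
      using \<open>p \<in> V\<close> unfolding supporting_points_def by force
    moreover have "((\<lambda>v. wedge (p - v) (q - v)) \<longlongrightarrow> wedge (p - v0) (q - v0)) (at v0 within S)"
      unfolding wedge_eq by (intro tendsto_intros)
    ultimately have "eventually (\<lambda>v. wedge (p - v) (q - v) < 0) (at v0 within S)"
      by (simp add: order_tendstoD(2))
    then show ?thesis
      by eventually_elim (use \<open>q \<in> V\<close> in \<open>auto simp: supporting_points_def\<close>)
  qed simp
  then have "eventually (\<lambda>v. \<forall>p\<in>V. p \<in> supporting_points V v \<longrightarrow> p \<in> supporting_points V v0) (at v0 within S)"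
    using assms by (simp add: eventually_ball_finite)
  then show ?thesis
    by eventually_elim (auto simp: supporting_points_def)
qed

lemma psi_set_hull_on_circle:
  assumes "finite V" "V \<noteq> {}" "V \<subseteq> ball 0 1" "cmod v = 1"
  shows "cmod (psi_set (convex hull V) v) = 1"
proof -
  obtain p where p: "p \<in> supporting_points V v"
    using supporting_points_nonempty[OF assms] by blast
  then have "cmod p < 1" using assms(3) by (auto simp: supporting_points_def)
  then show ?thesis
    using psi_set_hull_eq_psi_pt[OF assms(3,4) p] psi_pt_on_circle assms(4) by simp
qed

lemma continuous_on_psi_set_hull:
  assumes fin: "finite V" "V \<noteq> {}" and V: "V \<subseteq> ball 0 1"
  shows "continuous_on (sphere 0 1) (psi_set (convex hull V))"
  unfolding continuous_on_def
proof
  fix v0 :: complex assume "v0 \<in> sphere 0 1"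
  then have v0: "cmod v0 = 1" by simp
  \<comment> \<open>near v0 every supporting vertex at v also supports at v0, and psi_set agrees with its psi_pt at both points\<close>
  have lim: "(psi_pt p \<longlongrightarrow> psi_pt p v0) (at v0 within sphere 0 1)" if "p \<in> V" for p
    using continuous_on_psi_pt[of p] that V v0 by (auto simp: continuous_on_def)
  show "(psi_set (convex hull V) \<longlongrightarrow> psi_set (convex hull V) v0) (at v0 within sphere 0 1)"
  proof (rule tendstoI)
    fix e :: real assume "e > 0"
    have "eventually (\<lambda>v. \<forall>p\<in>V. dist (psi_pt p v) (psi_pt p v0) < e) (at v0 within sphere 0 1)"
      using fin(1) tendstoD[OF lim \<open>e > 0\<close>] by (simp add: eventually_ball_finite)
    moreover have "eventually (\<lambda>v. v \<in> sphere 0 1) (at v0 within sphere 0 1)"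
      by (simp add: eventually_at_filter)
    ultimately show "eventually (\<lambda>v. dist (psi_set (convex hull V) v) (psi_set (convex hull V) v0) < e)
        (at v0 within sphere 0 1)"
      using eventually_supporting_points_subset[OF fin(1)]
    proof eventually_elim
      case (elim v)
      then obtain p where "p \<in> supporting_points V v" "p \<in> supporting_points V v0"
        using supporting_points_nonempty[OF fin V] by fastforce
      then show ?case
        using elim psi_set_hull_eq_psi_pt[OF V] v0 by (auto simp: supporting_points_def)
    qed
  qed
qed

subsection \<open>Lifts of circle maps and their derivatives\<close>

lemma norm_circ_proj [simp]: "cmod (circ_proj t) = 1"
  by (simp add: circ_proj_def)

lemma continuous_on_circ_proj: "continuous_on S circ_proj"
  unfolding circ_proj_def cis_conv_exp by (intro continuous_intros)

lemma circ_proj_eq_iff: "circ_proj x = circ_proj y \<longleftrightarrow> (\<exists>k::int. x = y + k)"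
proof
  assume "circ_proj x = circ_proj y"
  moreover have "cis (2 * pi * (x - y)) = circ_proj x / circ_proj y"
    by (simp add: circ_proj_def cis_divide right_diff_distrib)
  moreover have "circ_proj y \<noteq> 0" by (simp add: circ_proj_def)
  ultimately have "exp (\<i> * complex_of_real (2 * pi * (x - y))) = 1"
    by (simp add: cis_conv_exp)
  then obtain k :: int where "2 * pi * (x - y) = of_int (2 * k) * pi"
    by (auto simp: exp_eq_1)
  then have "pi * (2 * (x - y)) = pi * (2 * k)" by (simp add: mult_ac)
  then show "\<exists>k::int. x = y + k" by (intro exI[of _ k]) simp
next
  assume "\<exists>k::int. x = y + k"
  then obtain k :: int where "x = y + k" by blast
  then show "circ_proj x = circ_proj y"
    by (simp add: circ_proj_def distrib_left cis_mult[symmetric])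
qed

lemma circ_proj_add_int [simp]: "circ_proj (x + of_int k) = circ_proj x"
  unfolding circ_proj_eq_iff by (intro exI[of _ k]) simp

lemma circ_proj_add_1 [simp]: "circ_proj (x + 1) = circ_proj x"
  using circ_proj_add_int[of x 1] by simp

lemma circ_proj_in_window:
  assumes "cmod w = 1"
  obtains t where "circ_proj t = w" "a \<le> t" "t < a + 1"
proof -
  define t0 where "t0 = Arg w / (2 * pi)"
  have "w \<noteq> 0" using assms by auto
  then have "circ_proj t0 = w"
    using cis_Arg[of w] assms by (simp add: circ_proj_def t0_def sgn_div_norm)
  moreover have "circ_proj (t0 - of_int \<lfloor>t0 - a\<rfloor>) = circ_proj t0"
    using circ_proj_add_int[of t0 "- \<lfloor>t0 - a\<rfloor>"] by simp
  moreover have "a \<le> t0 - of_int \<lfloor>t0 - a\<rfloor>" "t0 - of_int \<lfloor>t0 - a\<rfloor> < a + 1"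
    by linarith+
  ultimately show ?thesis using that by simp
qed

lemma lifts_differ_by_int:
  fixes G G' :: "real \<Rightarrow> real"
  assumes "continuous_on UNIV G" "continuous_on UNIV G'" "\<And>t. circ_proj (G' t) = circ_proj (G t)"
  obtains k :: int where "\<And>t. G' t = G t + k"
proof -
  define d where "d t = G' t - G t" for t
  have d_int: "d t \<in> \<int>" for t
  proof -
    obtain k :: int where "G' t = G t + k" using assms(3)[of t] circ_proj_eq_iff by blast
    then show ?thesis by (simp add: d_def)
  qed
  have discrete: "1 \<le> norm (d y - d x)" if "d y \<noteq> d x" for x y
    using Ints_nonzero_abs_ge1[OF Ints_diff[OF d_int d_int]] that by simp
  have "continuous_on UNIV d" unfolding d_def using assms(1,2) by (intro continuous_intros)
  then have "d constant_on UNIV"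
    using discrete by (intro continuous_discrete_range_constant[OF connected_UNIV]) (auto intro!: exI[of _ 1])
  then have "d t = d 0" for t by (auto simp: constant_on_def)
  moreover obtain k :: int where "d 0 = k" using d_int[of 0] by (auto elim: Ints_cases)
  ultimately show ?thesis using that[of k] unfolding d_def by (simp add: algebra_simps)
qed

lemma circle_lift:
  assumes cont: "continuous_on (sphere 0 1) g" and sph: "\<And>z. cmod z = 1 \<Longrightarrow> cmod (g z) = 1"
  shows "continuous_on UNIV (circle_lift g)" "\<And>t. circ_proj (circle_lift g t) = g (circ_proj t)"
proof -
  define h where "h t = g (circ_proj t)" for t
  have "continuous_on UNIV h" unfolding h_def
    by (rule continuous_on_compose2[OF cont continuous_on_circ_proj]) auto
  moreover have "h t \<noteq> 0" for t using sph[of "circ_proj t"] unfolding h_def by auto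
  ultimately obtain l where l: "continuous_on UNIV l" "\<And>t. t \<in> UNIV \<Longrightarrow> h t = exp (l t)"
    by (rule continuous_logarithm_on_contractible[OF _ contractible_UNIV]) blast
  have h_eq: "h t = cis (Im (l t))" for t
  proof -
    have "exp (Re (l t)) = 1" using sph[of "circ_proj t"] l(2)[of t] unfolding h_def by simp
    then show ?thesis using l(2)[of t] exp_eq_polar[of "l t"] by simp
  qed
  define G where "G t = Im (l t) / (2 * pi) - \<lfloor>Im (l 0) / (2 * pi)\<rfloor>" for t
  have G: "continuous_on UNIV G \<and> (\<forall>t. circ_proj (G t) = g (circ_proj t)) \<and> 0 \<le> G 0 \<and> G 0 < 1"
  proof (intro conjI allI)
    show "continuous_on UNIV G" unfolding G_def using l(1) by (intro continuous_intros) auto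
    fix t
    have "circ_proj (G t) = circ_proj (Im (l t) / (2 * pi))"
      using circ_proj_add_int[of "Im (l t) / (2 * pi)" "- \<lfloor>Im (l 0) / (2 * pi)\<rfloor>"]
      by (simp add: G_def)
    also have "\<dots> = h t" by (simp add: circ_proj_def h_eq)
    finally show "circ_proj (G t) = g (circ_proj t)" by (simp add: h_def)
  qed (simp_all add: G_def frac_lt_1 flip: frac_def)
  have "circle_lift g = G"
    unfolding circle_lift_def
  proof (rule the_equality)
    fix G' assume G': "continuous_on UNIV G' \<and> (\<forall>t. circ_proj (G' t) = g (circ_proj t)) \<and> 0 \<le> G' 0 \<and> G' 0 < 1"
    then obtain k :: int where k: "\<And>t. G' t = G t + k"
      using lifts_differ_by_int[of G G'] G by metis
    then have "k = 0" using G G' k[of 0] by linarith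
    then show "G' = G" using k by auto
  qed (rule G)
  then show "continuous_on UNIV (circle_lift g)" "\<And>t. circ_proj (circle_lift g t) = g (circ_proj t)"
    using G by auto
qed

lemma lift_has_real_derivative:
  fixes G :: "real \<Rightarrow> real" and h :: "real \<Rightarrow> complex"
  assumes G: "continuous_on UNIV G" "\<And>t. circ_proj (G t) = h t"
    and h: "(h has_vector_derivative h') (at x within S)" and "x \<in> S"
  shows "(G has_real_derivative Im (h' / h x) / (2 * pi)) (at x within S)"
proof -
  \<comment> \<open>near x, G is G x plus the principal argument of h t / h x, rescaled\<close>
  have hx: "h x \<noteq> 0" using G(2)[of x] norm_circ_proj[of "G x"] by auto
  define q where "q = (\<lambda>t. h t / h x)"
  have q: "(q has_vector_derivative h' / h x) (at x within S)" "q x = 1"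
    using has_vector_derivative_divide[OF h, of "h x"] hx by (simp_all add: q_def)
  have "(Ln has_field_derivative 1) (at (q x) within q ` S)"
    using has_field_derivative_Ln[of 1] q(2) by (auto intro: has_field_derivative_at_within)
  from field_vector_diff_chain_within[OF q(1) this]
  have "((\<lambda>t. Im (Ln (q t))) has_vector_derivative Im (h' / h x)) (at x within S)"
    using bounded_linear.has_vector_derivative[OF bounded_linear_Im] by (simp add: o_def)
  then have F: "((\<lambda>t. G x + Im (Ln (q t)) / (2 * pi)) has_vector_derivative Im (h' / h x) / (2 * pi))
      (at x within S)"
    by (auto intro!: derivative_eq_intros)
  obtain d where "d > 0" and d: "\<And>t. dist t x < d \<Longrightarrow> dist (G t) (G x) < 1/2"
    using G(1) unfolding continuous_on_iff by (metis UNIV_I half_gt_zero_iff zero_less_one)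
  have "G x + Im (Ln (q t)) / (2 * pi) = G t" if "dist t x < d" for t
  proof -
    have "q t = cis (2 * pi * (G t - G x))"
      unfolding q_def G(2)[symmetric] by (simp add: circ_proj_def cis_divide right_diff_distrib)
    then have "q t = exp (\<i> * of_real (2 * pi * (G t - G x)))" by (simp add: cis_conv_exp)
    moreover have "- (1/2) < G t - G x" "G t - G x < 1/2"
      using d[OF that] unfolding dist_real_def by linarith+
    then have "- pi < 2 * pi * (G t - G x)" "2 * pi * (G t - G x) \<le> pi"
      using mult_strict_left_mono[of _ _ "2 * pi"] pi_gt_zero by fastforce+
    ultimately have "Ln (q t) = \<i> * of_real (2 * pi * (G t - G x))" by (simp add: Ln_exp)
    then show ?thesis by simp
  qed
  then have "(G has_vector_derivative Im (h' / h x) / (2 * pi)) (at x within S)"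
    using has_vector_derivative_transform_within[OF F \<open>d > 0\<close> \<open>x \<in> S\<close>] by simp
  then show ?thesis by (simp add: has_real_derivative_iff_has_vector_derivative)
qed

lemma circ_proj_has_vector_derivative:
  "(circ_proj has_vector_derivative 2 * pi * \<i> * circ_proj t) (at t within S)"
proof -
  have circ_proj_exp: "circ_proj x = exp (2 * pi * \<i> * complex_of_real x)" for x
    by (simp add: circ_proj_def cis_conv_exp mult_ac)
  have "((\<lambda>z. exp (2 * pi * \<i> * z)) has_field_derivative
      2 * pi * \<i> * exp (2 * pi * \<i> * complex_of_real t)) (at (complex_of_real t))"
    by (auto intro!: derivative_eq_intros)
  from has_vector_derivative_real_field[OF this, of S] show ?thesis
    unfolding circ_proj_exp[abs_def] by simp
qed

lemma psi_pt_circ_proj_has_vector_derivative: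
  fixes t :: real
  assumes P: "cmod P < 1"
  defines "v \<equiv> circ_proj t"
  shows "((\<lambda>s. psi_pt P (circ_proj s)) has_vector_derivative
           2 * pi * \<i> * v * (of_real ((cmod P)\<^sup>2) - 1) / (1 - cnj P * v)\<^sup>2) (at t within S)"
proof -
  have "cmod (cnj P * v) < 1" using P by (simp add: v_def norm_mult)
  then have nz: "1 - cnj P * v \<noteq> 0" by auto
  have der: "((\<lambda>z. (P - z) / (1 - cnj P * z)) has_field_derivative
      ((- 1) * (1 - cnj P * v) - (P - v) * (- cnj P)) / ((1 - cnj P * v) * (1 - cnj P * v)))
      (at v within circ_proj ` S)"
    by (rule DERIV_divide) (use nz in \<open>auto intro!: derivative_eq_intros\<close>)
  have num: "(- 1) * (1 - cnj P * v) - (P - v) * (- cnj P) = of_real ((cmod P)\<^sup>2) - 1"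
    by (simp add: algebra_simps complex_norm_square[unfolded of_real_power])
  have "((\<lambda>z. (P - z) / (1 - cnj P * z)) has_field_derivative
      (of_real ((cmod P)\<^sup>2) - 1) / (1 - cnj P * v)\<^sup>2) (at v within circ_proj ` S)"
    using der unfolding num power2_eq_square[of "1 - cnj P * v"] .
  from field_vector_diff_chain_within[OF circ_proj_has_vector_derivative this[unfolded v_def]]
  show ?thesis
    using psi_pt_eq_moebius[OF norm_circ_proj P] by (simp add: o_def v_def mult_ac)
qed

lemma psi_pt_angular_speed:
  assumes v: "cmod v = 1" and P: "cmod P < 1"
  shows "Im (2 * pi * \<i> * v * (of_real ((cmod P)\<^sup>2) - 1) / (1 - cnj P * v)\<^sup>2 / psi_pt P v) / (2 * pi)
    = cmod (P - psi_pt P v) / cmod (v - P)"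
proof -
  define D r where "D = 1 - cnj P * v" and "r = 1 - (cmod P)\<^sup>2"
  have "P \<noteq> v" using v P by auto
  have "v \<noteq> 0" using v by auto
  have "D \<noteq> 0" using norm_one_minus_cnj_mult[OF v, of P] \<open>P \<noteq> v\<close> by (auto simp: D_def)
  have r: "r > 0" using P by (simp add: r_def abs_square_less_1)
  have psi: "psi_pt P v = (P - v) / D" using psi_pt_eq_moebius[OF v P] by (simp add: D_def)
  have DP: "D * (P - v) = - v * of_real ((cmod (v - P))\<^sup>2)"
    unfolding D_def one_minus_cnj_mult_eq[OF v] complex_norm_square by (simp add: algebra_simps)
  have "2 * pi * \<i> * v * (of_real ((cmod P)\<^sup>2) - 1) / D\<^sup>2 / psi_pt P v
      = 2 * pi * \<i> * v * (- of_real r) / (D * (P - v))"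
    using \<open>D \<noteq> 0\<close> \<open>P \<noteq> v\<close> unfolding psi r_def by (simp add: field_simps power2_eq_square)
  also have "\<dots> = 2 * pi * \<i> * of_real (r / (cmod (v - P))\<^sup>2)"
    unfolding DP using \<open>v \<noteq> 0\<close> by (simp add: field_simps)
  finally have "2 * pi * \<i> * v * (of_real ((cmod P)\<^sup>2) - 1) / D\<^sup>2 / psi_pt P v
      = 2 * pi * \<i> * of_real (r / (cmod (v - P))\<^sup>2)" .
  moreover have "P - psi_pt P v = v * of_real r / D"
    unfolding psi r_def D_def using \<open>D \<noteq> 0\<close>[unfolded D_def]
    by (simp add: field_simps complex_norm_square[unfolded of_real_power])
  then have "cmod (P - psi_pt P v) = r / cmod (v - P)"
    using v r norm_one_minus_cnj_mult[OF v, of P] by (simp add: norm_mult norm_divide D_def)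
  ultimately show ?thesis by (simp add: D_def power2_eq_square)
qed

lemma lift_has_real_derivative_psi_pt:
  fixes G :: "real \<Rightarrow> real"
  assumes G: "continuous_on UNIV G" "\<And>t. circ_proj (G t) = g (circ_proj t)"
    and P: "cmod P < 1" and "x \<in> S" and "e > 0"
    and agree: "\<And>t. t \<in> S \<Longrightarrow> dist t x < e \<Longrightarrow> g (circ_proj t) = psi_pt P (circ_proj t)"
  shows "(G has_real_derivative cmod (P - psi_pt P (circ_proj x)) / cmod (circ_proj x - P))
    (at x within S)"
proof -
  have "((\<lambda>t. g (circ_proj t)) has_vector_derivative 2 * pi * \<i> * circ_proj x *
      (of_real ((cmod P)\<^sup>2) - 1) / (1 - cnj P * circ_proj x)\<^sup>2) (at x within S)"
    by (rule has_vector_derivative_transform_within[OF psi_pt_circ_proj_has_vector_derivative[OF P]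
          \<open>e > 0\<close> \<open>x \<in> S\<close>]) (use agree in auto)
  from lift_has_real_derivative[OF G this \<open>x \<in> S\<close>] show ?thesis
    using agree[OF \<open>x \<in> S\<close>] \<open>e > 0\<close> psi_pt_angular_speed[OF norm_circ_proj P] by simp
qed

subsection \<open>Arcs and chords\<close>

lemma circ_proj_diff:
  "circ_proj b - circ_proj a = cis (pi * (a + b)) * (2 * \<i> * of_real (sin (pi * (b - a))))"
proof -
  have "circ_proj b = cis (pi * (a + b)) * cis (pi * (b - a))"
    "circ_proj a = cis (pi * (a + b)) * cis (- (pi * (b - a)))"
    by (simp_all add: circ_proj_def cis_mult algebra_simps)
  moreover have "cis y - cis (- y) = 2 * \<i> * of_real (sin y)" for y
    by (simp add: complex_eq_iff)
  ultimately show ?thesis by (simp add: right_diff_distrib[symmetric])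
qed

lemma wedge_circ_proj:
  "wedge (circ_proj c - circ_proj a) (circ_proj x - circ_proj a)
     = 4 * sin (pi * (c - a)) * sin (pi * (x - a)) * sin (pi * (x - c))"
proof -
  have "wedge (circ_proj c - circ_proj a) (circ_proj x - circ_proj a)
      = Im (cnj (cis (pi * (a + c))) * cis (pi * (a + x)) *
          of_real (4 * sin (pi * (c - a)) * sin (pi * (x - a))))"
    unfolding circ_proj_diff wedge_def by (simp add: algebra_simps)
  also have "cnj (cis (pi * (a + c))) * cis (pi * (a + x)) = cis (pi * (x - c))"
    by (simp add: cis_cnj cis_mult algebra_simps)
  finally show ?thesis by (simp add: mult_ac)
qed

lemma sin_pi_nonneg: "0 \<le> y \<Longrightarrow> y \<le> 1 \<Longrightarrow> 0 \<le> sin (pi * y)"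
  by (rule sin_ge_zero) (auto simp: mult_left_le)

lemma sin_pi_nonpos: "- 1 \<le> y \<Longrightarrow> y \<le> 0 \<Longrightarrow> sin (pi * y) \<le> 0"
  using sin_pi_nonneg[of "- y"] by simp

lemma wedge_circ_proj_nonpos:
  assumes "a \<le> x" "x \<le> c" "c \<le> a + 1"
  shows "wedge (circ_proj c - circ_proj a) (circ_proj x - circ_proj a) \<le> 0"
  unfolding wedge_circ_proj using assms
  by (intro mult_nonneg_nonpos mult_nonneg_nonneg sin_pi_nonneg sin_pi_nonpos) auto

lemma wedge_circ_proj_nonneg:
  assumes "a \<le> c" "c \<le> x" "x \<le> a + 1"
  shows "0 \<le> wedge (circ_proj c - circ_proj a) (circ_proj x - circ_proj a)"
  unfolding wedge_circ_proj using assms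
  by (intro mult_nonneg_nonneg sin_pi_nonneg) auto

lemma arc_co_right_of_chord:
  assumes P: "cmod P < 1" and w2: "wedge (P - w1) (w2 - w1) < 0" and v: "v \<in> arc_co w1 w2"
  shows "wedge (P - w1) (v - w1) \<le> 0"
proof -
  obtain x a b where ab: "v = circ_proj x" "circ_proj a = w1" "circ_proj b = w2"
    "a < b" "b \<le> a + 1" "a \<le> x" "x < b"
    using v unfolding arc_co_def by blast
  obtain \<sigma> where \<sigma>: "0 < \<sigma>" "\<And>y. wedge (psi_pt P w1 - w1) (y - w1) = \<sigma> * wedge (P - w1) (y - w1)"
    using psi_pt_chord_wedge[OF _ P] ab(2) by (metis norm_circ_proj)
  obtain c where c: "circ_proj c = psi_pt P w1" "a \<le> c" "c < a + 1"
    using circ_proj_in_window psi_pt_on_circle[OF _ P] ab(2) by (metis norm_circ_proj)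
  \<comment> \<open>w2 lies right of the chord from w1 through P, hence so does the whole arc from w1 to w2\<close>
  have "b < c"
  proof (rule ccontr)
    assume "\<not> b < c"
    then have "0 \<le> wedge (psi_pt P w1 - w1) (w2 - w1)"
      using wedge_circ_proj_nonneg[of a c b] ab c by simp
    then show False using \<sigma> w2 by (simp add: zero_le_mult_iff)
  qed
  then have "wedge (psi_pt P w1 - w1) (v - w1) \<le> 0"
    using wedge_circ_proj_nonpos[of a x c] ab c by simp
  then show ?thesis using \<sigma> by (simp add: mult_le_0_iff)
qed

lemma arc_co_left_of_chord:
  assumes P: "cmod P < 1" and w1: "0 < wedge (P - w2) (w1 - w2)" and v: "v \<in> arc_co w1 w2"
  shows "0 \<le> wedge (P - w2) (v - w2)"
proof -
  obtain x a b where ab: "v = circ_proj x" "circ_proj a = w1" "circ_proj b = w2"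
    "a < b" "b \<le> a + 1" "a \<le> x" "x < b"
    using v unfolding arc_co_def by blast
  obtain \<sigma> where \<sigma>: "0 < \<sigma>" "\<And>y. wedge (psi_pt P w2 - w2) (y - w2) = \<sigma> * wedge (P - w2) (y - w2)"
    using psi_pt_chord_wedge[OF _ P] ab(3) by (metis norm_circ_proj)
  obtain d where d: "circ_proj d = psi_pt P w2" "b \<le> d" "d < b + 1"
    using circ_proj_in_window psi_pt_on_circle[OF _ P] ab(3) by (metis norm_circ_proj)
  have "d < a + 1"
  proof (rule ccontr)
    assume "\<not> d < a + 1"
    then have "wedge (psi_pt P w2 - w2) (w1 - w2) \<le> 0"
      using wedge_circ_proj_nonpos[of b "a + 1" d] ab d by simp
    then show False using \<sigma> w1 by (simp add: mult_le_0_iff)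
  qed
  then have "0 \<le> wedge (psi_pt P w2 - w2) (v - w2)"
    using wedge_circ_proj_nonneg[of b d "x + 1"] ab d by simp
  then show ?thesis using \<sigma> by (simp add: zero_le_mult_iff)
qed

lemma circ_proj_in_arc_co:
  assumes "circ_proj a = w1" "circ_proj b = w2" "a < b" "b \<le> a + 1" "a \<le> t" "t < b"
  shows "circ_proj t \<in> arc_co w1 w2"
  unfolding arc_co_def using assms by blast

lemma arc_oo_nhd:
  assumes "v \<in> arc_oo w1 w2" "circ_proj x = v"
  obtains e where "e > 0" "\<And>t. dist t x < e \<Longrightarrow> circ_proj t \<in> arc_co w1 w2"
proof -
  obtain y a b where ab: "v = circ_proj y" "circ_proj a = w1" "circ_proj b = w2"
    "a < b" "b \<le> a + 1" "a < y" "y < b"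
    using assms(1) unfolding arc_oo_def by blast
  obtain k :: int where k: "x = y + k" using assms(2) ab(1) circ_proj_eq_iff by metis
  have "circ_proj t \<in> arc_co w1 w2" if "dist t x < min (y - a) (b - y)" for t
  proof -
    have "circ_proj (t - k) \<in> arc_co w1 w2"
      using that k ab by (intro circ_proj_in_arc_co[of a _ b]) (auto simp: dist_real_def)
    then show ?thesis using circ_proj_add_int[of "t - k" k] by simp
  qed
  then show ?thesis using that[of "min (y - a) (b - y)"] ab by simp
qed

lemma arc_co_right_nhd:
  assumes "circ_proj x = w1" "cmod w2 = 1" "w1 \<noteq> w2"
  obtains e where "e > 0" "\<And>t. x \<le> t \<Longrightarrow> t < x + e \<Longrightarrow> circ_proj t \<in> arc_co w1 w2"
proof -
  obtain b where b: "circ_proj b = w2" "x \<le> b" "b < x + 1"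
    using circ_proj_in_window[OF assms(2)] .
  then have "x < b" using assms by (cases "b = x") auto
  then show ?thesis
    using that[of "b - x"] circ_proj_in_arc_co[OF assms(1) b(1)] b by simp
qed

lemma arc_co_left_nhd:
  assumes "circ_proj x = w2" "cmod w1 = 1" "w1 \<noteq> w2"
  obtains e where "e > 0" "\<And>t. x - e < t \<Longrightarrow> t < x \<Longrightarrow> circ_proj t \<in> arc_co w1 w2"
proof -
  obtain a where a: "circ_proj a = w1" "x - 1 \<le> a" "a < x"
    using circ_proj_in_window[OF assms(2), of "x - 1"] by auto
  have "a \<noteq> x - 1" using a assms circ_proj_add_1[of "x - 1"] by auto
  then show ?thesis
    using that[of "x - a"] circ_proj_in_arc_co[OF a(1) assms(1)] a by simp
qed

subsection \<open>Convex polygons in the disk\<close>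

locale disk_polygon =
  fixes n :: nat and A :: "nat \<Rightarrow> complex"
  assumes ccw: "ccw_convex_polygon n A" and in_disk: "\<And>i. i < n \<Longrightarrow> cmod (A i) < 1"
begin

abbreviation succ :: "nat \<Rightarrow> nat" where
  "succ i \<equiv> Suc i mod n"

abbreviation polygon :: "complex set" where
  "polygon \<equiv> convex hull (A ` {..<n})"

definition edge_point :: "nat \<Rightarrow> complex" where
  "edge_point i = line_circle_near (A i) (A (succ i))"

lemma three_le_n: "3 \<le> n"
  using ccw by (simp add: ccw_convex_polygon_def)

lemma succ_less: "succ i < n"
  using three_le_n by simp

lemma succ_distinct:
  assumes "i < n"
  shows "succ i \<noteq> i" "succ (succ i) \<noteq> i" "succ (succ i) \<noteq> succ i"
  using three_le_n assms by (auto simp: mod_Suc)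

lemma wedge_edge_pos:
  assumes "i < n" "k < n" "k \<noteq> i" "k \<noteq> succ i"
  shows "0 < wedge (A (succ i) - A i) (A k - A i)"
  using ccw assms by (simp add: ccw_convex_polygon_def wedge_def)

lemma wedge_edge_nonneg:
  assumes "i < n" "k < n"
  shows "0 \<le> wedge (A (succ i) - A i) (A k - A i)"
  using wedge_edge_pos[OF assms] by (cases "k = i \<or> k = succ i") (auto simp: wedge_eq)

lemma vertices_subset_disk: "A ` {..<n} \<subseteq> ball 0 1"
  using in_disk by auto

lemma edge_point_on_ray:
  assumes "i < n"
  obtains s where "1 < s" "edge_point i = A (succ i) + of_real s * (A i - A (succ i))"
    "cmod (edge_point i) = 1"
proof -
  have "0 < wedge (A (succ i) - A i) (A (succ (succ i)) - A i)"
    using wedge_edge_pos[OF assms] succ_less succ_distinct[OF assms] by simp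
  then have "A i \<noteq> A (succ i)" by (auto simp: wedge_eq)
  then show ?thesis
    using line_circle_near_eq[OF in_disk[OF assms] in_disk[OF succ_less]] that
    unfolding edge_point_def by blast
qed

lemma edge_point_on_circle:
  assumes "i < n"
  shows "cmod (edge_point i) = 1"
  using edge_point_on_ray[OF assms] by blast

lemma edge_points_distinct:
  assumes "i < n"
  shows "edge_point i \<noteq> edge_point (succ i)"
proof
  define X P Z where "X = A i" and "P = A (succ i)" and "Z = A (succ (succ i))"
  obtain s where s: "edge_point i = P + of_real s * (X - P)"
    using edge_point_on_ray[OF assms] unfolding X_def P_def by blast
  obtain s' where s': "1 < s'" "edge_point (succ i) = Z + of_real s' * (P - Z)"
    using edge_point_on_ray[OF succ_less] unfolding P_def Z_def by blast
  assume "edge_point i = edge_point (succ i)"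
  \<comment> \<open>then Z would lie on the line through the edge X P\<close>
  then have "of_real s * (X - P) = of_real (s' - 1) * (P - Z)"
    using s s' by (simp add: algebra_simps)
  then have "wedge (of_real s * (X - P)) (P - X) = wedge (of_real (s' - 1) * (P - Z)) (P - X)"
    by simp
  then have "(s' - 1) * wedge (P - X) (Z - X) = 0"
    by (simp add: wedge_eq algebra_simps)
  moreover have "0 < wedge (P - X) (Z - X)"
    using wedge_edge_pos[OF assms] succ_less succ_distinct[OF assms]
    unfolding X_def P_def Z_def by simp
  ultimately show False using s' by simp
qed

lemma psi_set_at_edge_point:
  assumes "i < n"
  shows "psi_set polygon (edge_point i) = psi_pt (A i) (edge_point i)"
proof (rule psi_set_hull_eq_psi_pt[OF vertices_subset_disk])
  obtain s where s: "1 < s" "edge_point i = A (succ i) + of_real s * (A i - A (succ i))"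
    using edge_point_on_ray[OF assms] by blast
  show "cmod (edge_point i) = 1" using edge_point_on_circle[OF assms] .
  have "wedge (A i - edge_point i) (A k - edge_point i)
      = (s - 1) * wedge (A (succ i) - A i) (A k - A i)" for k
    unfolding s(2) by (simp add: wedge_eq algebra_simps)
  then show "A i \<in> supporting_points (A ` {..<n}) (edge_point i)"
    using wedge_edge_nonneg[OF assms] s(1) assms by (auto simp: supporting_points_def)
qed

lemma wedge_nonneg_on_edge_arc:
  assumes i: "i < n" and v: "v \<in> arc_co (edge_point i) (edge_point (succ i))"
  shows "0 \<le> wedge (A i - A (succ i)) (v - A (succ i))"
    and "0 \<le> wedge (A (succ (succ i)) - A (succ i)) (v - A (succ i))"
proof -
  define X P Z u u' where "X = A i" and "P = A (succ i)" and "Z = A (succ (succ i))"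
    and "u = edge_point i" and "u' = edge_point (succ i)"
  obtain s where s: "1 < s" "u = P + of_real s * (X - P)"
    using edge_point_on_ray[OF i] unfolding X_def P_def u_def by blast
  obtain s' where s': "1 < s'" "u' = Z + of_real s' * (P - Z)"
    using edge_point_on_ray[OF succ_less] unfolding P_def Z_def u'_def by blast
  have P: "cmod P < 1" using in_disk[OF succ_less] by (simp add: P_def)
  have "wedge (P - u) (u' - u) = s * (1 - s') * wedge (P - X) (Z - X)"
    unfolding s(2) s'(2) by (simp add: wedge_eq algebra_simps)
  also have "\<dots> < 0"
    using wedge_edge_pos[OF i] succ_less succ_distinct[OF i] s(1) s'(1)
    by (intro mult_neg_pos mult_pos_neg) (auto simp: X_def P_def Z_def)
  finally have "wedge (P - u) (u' - u) < 0" .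
  from arc_co_right_of_chord[OF P this v[folded u_def u'_def]]
  have "s * wedge (P - X) (v - P) \<le> 0"
    unfolding s(2) by (simp add: wedge_eq algebra_simps)
  then have "wedge (P - X) (v - P) \<le> 0" using s(1) by (simp add: mult_le_0_iff)
  then show "0 \<le> wedge (A i - A (succ i)) (v - A (succ i))"
    unfolding X_def P_def by (simp add: wedge_eq algebra_simps)
  have "0 < wedge (Z - P) (X - P)"
    using wedge_edge_pos[OF succ_less i] succ_distinct[OF i] unfolding X_def P_def Z_def by metis
  moreover have "wedge (P - u') (u - u') = (s' - 1) * s * wedge (Z - P) (X - P)"
    unfolding s(2) s'(2) by (simp add: wedge_eq algebra_simps)
  ultimately have "0 < wedge (P - u') (u - u')" using s s' by simp
  from arc_co_left_of_chord[OF P this v[folded u_def u'_def]]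
  have "0 \<le> (s' - 1) * wedge (Z - P) (v - P)"
    unfolding s'(2) by (simp add: wedge_eq algebra_simps)
  then show "0 \<le> wedge (A (succ (succ i)) - A (succ i)) (v - A (succ i))"
    using s'(1) by (simp add: zero_le_mult_iff P_def Z_def)
qed

lemma psi_set_on_edge_arc:
  assumes i: "i < n" and v: "v \<in> arc_co (edge_point i) (edge_point (succ i))"
  shows "psi_set polygon v = psi_pt (A (succ i)) v"
proof -
  define X P Z where "X = A i" and "P = A (succ i)" and "Z = A (succ (succ i))"
  \<comment> \<open>v is outside the half-plane of the edge X P but inside that of the edge P Z, so P supports at v\<close>
  have "0 \<le> wedge (A k - P) (v - P)" if k: "k < n" for k
  proof (rule wedge_cone_nonneg[of "Z - P" "X - P"])
    show "0 < wedge (Z - P) (X - P)"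
      using wedge_edge_pos[OF succ_less i] succ_distinct[OF i] unfolding X_def P_def Z_def by metis
    show "0 \<le> wedge (Z - P) (A k - P)"
      using wedge_edge_nonneg[OF succ_less k] unfolding P_def Z_def .
    show "0 \<le> wedge (A k - P) (X - P)"
      using wedge_edge_nonneg[OF i k] unfolding X_def P_def by (simp add: wedge_eq algebra_simps)
    show "0 \<le> wedge (X - P) (v - P)" "0 \<le> wedge (Z - P) (v - P)"
      using wedge_nonneg_on_edge_arc[OF i v] unfolding X_def P_def Z_def by simp_all
  qed
  then have "0 \<le> wedge (P - v) (A k - v)" if "k < n" for k
    using that by (simp add: wedge_eq algebra_simps)
  moreover have "cmod v = 1" using v unfolding arc_co_def by auto
  ultimately show ?thesis
    using psi_set_hull_eq_psi_pt[OF vertices_subset_disk] succ_less unfolding P_def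
    by (auto simp: supporting_points_def)
qed

lemma succ_surjective:
  assumes "i < n"
  obtains j where "j < n" "succ j = i"
proof (cases i)
  case 0
  then show ?thesis using that[of "n - 1"] three_le_n by simp
next
  case (Suc j)
  then show ?thesis using that[of j] assms by simp
qed

lemma circle_lift_psi_set:
  shows "continuous_on UNIV (circle_lift (psi_set polygon))"
    and "\<And>t. circ_proj (circle_lift (psi_set polygon) t) = psi_set polygon (circ_proj t)"
proof -
  have "A 0 \<in> A ` {..<n}" using three_le_n by simp
  then have "A ` {..<n} \<noteq> {}" by blast
  note V = finite_imageI[OF finite_lessThan] this vertices_subset_disk
  show "continuous_on UNIV (circle_lift (psi_set polygon))"
    "\<And>t. circ_proj (circle_lift (psi_set polygon) t) = psi_set polygon (circ_proj t)"
    using circle_lift[OF continuous_on_psi_set_hull[OF V] psi_set_hull_on_circle[OF V]] by auto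
qed

lemma lift_has_derivative_on_edge_arc:
  assumes i: "i < n" and v: "v \<in> arc_oo (edge_point i) (edge_point (succ i))" and x: "circ_proj x = v"
  shows "(circle_lift (psi_set polygon) has_real_derivative
      cmod (A (succ i) - psi_pt (A (succ i)) v) / cmod (v - A (succ i))) (at x)"
proof -
  obtain e where "e > 0" "\<And>t. dist t x < e \<Longrightarrow> circ_proj t \<in> arc_co (edge_point i) (edge_point (succ i))"
    using arc_oo_nhd[OF v x] by blast
  then show ?thesis
    using lift_has_real_derivative_psi_pt[OF circle_lift_psi_set in_disk, of "succ i" x UNIV e]
      psi_set_on_edge_arc[OF i] succ_less x by simp
qed

lemma lift_has_right_derivative_at_edge_point:
  assumes i: "i < n" and x: "circ_proj x = edge_point i"
  shows "(circle_lift (psi_set polygon) has_real_derivative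
      cmod (A (succ i) - psi_pt (A (succ i)) (edge_point i)) / cmod (edge_point i - A (succ i)))
      (at x within {x..})"
proof -
  obtain e where "e > 0"
    and arc: "\<And>t. x \<le> t \<Longrightarrow> t < x + e \<Longrightarrow> circ_proj t \<in> arc_co (edge_point i) (edge_point (succ i))"
    using arc_co_right_nhd[OF x edge_point_on_circle edge_points_distinct[OF i]] succ_less by blast
  have "psi_set polygon (circ_proj t) = psi_pt (A (succ i)) (circ_proj t)"
    if "t \<in> {x..}" "dist t x < e" for t
    using psi_set_on_edge_arc[OF i] arc[of t] that by (simp add: dist_real_def)
  from lift_has_real_derivative_psi_pt[OF circle_lift_psi_set in_disk[OF succ_less], where x = x and S = "{x..}",
      OF _ \<open>e > 0\<close> this]
  show ?thesis using x by simp
qed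

lemma lift_has_left_derivative_at_edge_point:
  assumes i: "i < n" and x: "circ_proj x = edge_point i"
  shows "(circle_lift (psi_set polygon) has_real_derivative
      cmod (A i - psi_pt (A i) (edge_point i)) / cmod (edge_point i - A i)) (at x within {..x})"
proof -
  obtain j where j: "j < n" "succ j = i" using succ_surjective[OF i] .
  obtain e where "e > 0"
    and arc: "\<And>t. x - e < t \<Longrightarrow> t < x \<Longrightarrow> circ_proj t \<in> arc_co (edge_point j) (edge_point i)"
    using arc_co_left_nhd[OF x edge_point_on_circle[OF j(1)]] edge_points_distinct[OF j(1)] j(2)
    by metis
  have "psi_set polygon (circ_proj t) = psi_pt (A i) (circ_proj t)"
    if "t \<in> {..x}" "dist t x < e" for t
  proof (cases "t = x")
    case True
    then show ?thesis using psi_set_at_edge_point[OF i] x by simp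
  next
    case False
    then have "circ_proj t \<in> arc_co (edge_point j) (edge_point i)"
      using arc[of t] that by (simp add: dist_real_def)
    then show ?thesis using psi_set_on_edge_arc[OF j(1)] j(2) by simp
  qed
  from lift_has_real_derivative_psi_pt[OF circle_lift_psi_set in_disk[OF i], where x = x and S = "{..x}",
      OF _ \<open>e > 0\<close> this]
  show ?thesis using x by simp
qed

end

theorem proposition2p4:
  fixes n :: nat and A :: "nat \<Rightarrow> complex" and u :: "nat \<Rightarrow> complex"
    and B :: "complex set"
  assumes poly: "ccw_convex_polygon n A"
    and inD: "\<forall>i<n. cmod (A i) < 1"
    and B_def: "B = convex hull (A ` {..<n})"
    and u_def: "\<forall>i<n. u i = line_circle_near (A i) (A (Suc i mod n))"
    and i: "i < n"
  shows "(\<forall>v \<in> arc_co (u i) (u (Suc i mod n)).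
            psi_set B v = psi_pt (A (Suc i mod n)) v)
       \<and> (\<forall>v \<in> arc_oo (u i) (u (Suc i mod n)). \<forall>x. circ_proj x = v \<longrightarrow>
            (circle_lift (psi_set B) has_real_derivative
               cmod (A (Suc i mod n) - psi_pt (A (Suc i mod n)) v) / cmod (v - A (Suc i mod n)))
            (at x))
       \<and> (\<forall>x. circ_proj x = u i \<longrightarrow>
            (circle_lift (psi_set B) has_real_derivative
               cmod (A (Suc i mod n) - psi_pt (A (Suc i mod n)) (u i)) / cmod (u i - A (Suc i mod n)))
            (at x within {x..})
          \<and> (circle_lift (psi_set B) has_real_derivative
               cmod (A i - psi_pt (A i) (u i)) / cmod (u i - A i))
            (at x within {..x}))"
proof -
  interpret disk_polygon n A
    using poly inD by unfold_locales auto
  have "Suc i mod n < n" using i by simp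
  then have u: "u i = edge_point i" "u (Suc i mod n) = edge_point (Suc i mod n)"
    using u_def i by (simp_all add: edge_point_def)
  show ?thesis
    unfolding B_def u
    using psi_set_on_edge_arc[OF i] lift_has_derivative_on_edge_arc[OF i]
      lift_has_right_derivative_at_edge_point[OF i] lift_has_left_derivative_at_edge_point[OF i]
    by blast
qed

end
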